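(* Let $M$ be a maximal set of colored hypergraphs that are degree-irreducible and degree-reducibly independent. Then $M$ is also a maximal set of hypergraphs that are irreducible and reducibly independent.
   Context: Fix $n\ge2$, $V=\mathbb{C}^n$ with standard basis $e_1,\dots,e_n$ and ${\rm SL}_n$ acting by left multiplication, integers $n_1,\dots,n_{n-1}\ge0$, and $W=\bigoplus_{i=1}^{n-1}(\bigwedge^iV)^{n_i}$; write the component of $t\in W$ in the $j$-th copy of $\bigwedge^iV$ as $t_{i,j}=\sum_{a_1<\dots<a_i}t_{i,j}^{a_1\cdots a_i}e_{a_1}\wedge\dots\wedge e_{a_i}$, extended to all index tuples by total antisymmetry. A colored hypergraph $\Gamma$ consists of an ordered finite vertex set and a finite family of hyperedges; each hyperedge has a size $i\in\{1,\dots,n-1\}$, a color $j\in\{1,\dots,n_i\}$ and is a multiset of $i$ vertices (its connections; it is looping if all connections are at one vertex); every vertex has exactly $n$ connections in total. The invariant $f_\Gamma\in\mathbb{C}[W]^{{\rm SL}_n}$ is the complete contraction obtained by taking one Levi-Civita symbol $\varepsilon_{a_1\cdots a_n}$ per vertex and one copy of the components of $t_{i,j}$ per hyperedge of size $i$ and color $j$, and contracting each of the $i$ indices of a hyperedge with an index slot of the vertex at which the corresponding connection sits (each slot used once); $f_\Gamma$ is determined by $\Gamma$ up to sign (a fixed sign convention is chosen), and $f$ is extended linearly to linear combinations of hypergraphs (graphsums). $\Gamma$ is disconnected if its vertices split into two nonempty classes with no hyperedge connecting both. A graphsum $\Upsilon$ is reducible if $f_\Upsilon=0$ or $f_\Upsilon=\sum_i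 a_if_{\Gamma_i}$ with all $\Gamma_i$ disconnected, and irreducible otherwise; graphsums are reducibly independent if only the trivial linear combination of them is reducible, and $\Upsilon_1\simeq_r\Upsilon_2$ means $\Upsilon_1-\Upsilon_2$ is reducible. The virtual degree of a vertex $v$ is $n$ minus the total number of connections at $v$ of looping hyperedges at $v$. The virtual degree type $d(\Gamma)$ of a hypergraph with $k$ vertices is the non-increasing sequence $(d_1,\dots,d_k)$ of virtual degrees of its vertices; for hypergraphs with the same number $k$ of vertices set $\Gamma<\Gamma'$ iff $d_1\le d_1',\dots,d_{k-1}\le d'_{k-1}$ and $d_k<d'_k$. A graphsum $\sum\Gamma_i$ is degree-reducible if it is $\simeq_r$ to $0$ or to a graphsum $\sum\Gamma'_j$ with $d(\Gamma'_j)<d(\Gamma_i)$ for all $i,j$; degree-irreducible otherwise. Graphsums $\Upsilon_1,\dots,\Upsilon_N$ are degree-reducibly independent if $\sum a_i\Upsilon_i$ is degree-reducible only when all $a_i=0$. *)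

theory Defs
  imports Complex_Main "HOL-Library.FuncSet"
begin

text \<open>A hyperedge is a pair (color j, list of connections);
its size i is the length of the connection list. A hypergraph is a pair
(k, E): vertices are 0,...,k-1 (in this order) and E is the (ordered) list
of hyperedges. The orderings fix the sign convention of the invariant.\<close>

type_synonym hedge = "nat \<times> nat list"
type_synonym hgraph = "nat \<times> hedge list"

definition nverts :: "hgraph \<Rightarrow> nat" where "nverts G = fst G"
definition hedges :: "hgraph \<Rightarrow> hedge list" where "hedges G = snd G"

definition valid_hg :: "nat \<Rightarrow> (nat \<Rightarrow> nat) \<Rightarrow> hgraph \<Rightarrow> bool" where
  "valid_hg n nc G \<longleftrightarrow>
     (\<forall>(j, c) \<in> set (hedges G).
        1 \<le> length c \<and> length c \<le> n - 1 \<and> 1 \<le> j \<and> j \<le> nc (length c)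
        \<and> (\<forall>v \<in> set c. v < nverts G))
     \<and> (\<forall>v < nverts G. (\<Sum>e\<leftarrow>hedges G. count_list (snd e) v) = n)"

definition inversions :: "nat list \<Rightarrow> nat" where
  "inversions a = card {(p, q). p < q \<and> q < length a \<and> a ! q < a ! p}"

definition levi :: "nat \<Rightarrow> nat list \<Rightarrow> complex" where
  "levi n a = (if length a = n \<and> distinct a \<and> set a \<subseteq> {..<n}
               then (-1) ^ inversions a else 0)"

text \<open>Points of W: t i j S is the coordinate of e_{S_1} wedge ... wedge e_{S_i}
in the j-th copy of the i-th exterior power, for S strictly increasing (values of t
at other arguments are irrelevant). Components for arbitrary index tuples are
obtained by total antisymmetry.\<close>
definition comp :: "(nat \<Rightarrow> nat \<Rightarrow> nat list \<Rightarrow> complex) \<Rightarrow> nat \<Rightarrow> nat list \<Rightarrow> complex" where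
  "comp t j a = (if distinct a then (-1) ^ inversions a * t (length a) j (sort a) else 0)"

definition conns :: "hgraph \<Rightarrow> (nat \<times> nat) set" where
  "conns G = {(e, p). e < length (hedges G) \<and> p < length (snd (hedges G ! e))}"

definition vidx :: "hgraph \<Rightarrow> (nat \<times> nat \<Rightarrow> nat) \<Rightarrow> nat \<Rightarrow> nat list" where
  "vidx G \<sigma> v = concat (map (\<lambda>e. map (\<lambda>p. \<sigma> (e, p))
        (filter (\<lambda>p. snd (hedges G ! e) ! p = v) [0..<length (snd (hedges G ! e))]))
      [0..<length (hedges G)])"

definition finv :: "nat \<Rightarrow> hgraph \<Rightarrow> (nat \<Rightarrow> nat \<Rightarrow> nat list \<Rightarrow> complex) \<Rightarrow> complex" where
  "finv n G t = (\<Sum>\<sigma> \<in> PiE (conns G) (\<lambda>_. {..<n}).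
      (\<Prod>v < nverts G. levi n (vidx G \<sigma> v)) *
      (\<Prod>e < length (hedges G). comp t (fst (hedges G ! e))
           (map (\<lambda>p. \<sigma> (e, p)) [0..<length (snd (hedges G ! e))])))"

text \<open>Graphsums: finitely supported complex linear combinations of hypergraphs.\<close>
type_synonym gsum = "hgraph \<Rightarrow> complex"

definition supp :: "gsum \<Rightarrow> hgraph set" where "supp c = {G. c G \<noteq> 0}"

definition is_gsum :: "nat \<Rightarrow> (nat \<Rightarrow> nat) \<Rightarrow> gsum \<Rightarrow> bool" where
  "is_gsum n nc c \<longleftrightarrow> finite (supp c) \<and> (\<forall>G \<in> supp c. valid_hg n nc G)"

definition fsum :: "nat \<Rightarrow> gsum \<Rightarrow> (nat \<Rightarrow> nat \<Rightarrow> nat list \<Rightarrow> complex) \<Rightarrow> complex" where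
  "fsum n c t = (\<Sum>G \<in> supp c. c G * finv n G t)"

definition single :: "hgraph \<Rightarrow> gsum" where
  "single G = (\<lambda>H. if H = G then 1 else 0)"

definition disconnected :: "hgraph \<Rightarrow> bool" where
  "disconnected G \<longleftrightarrow> (\<exists>A. A \<subseteq> {..<nverts G} \<and> A \<noteq> {} \<and> A \<noteq> {..<nverts G} \<and>
      (\<forall>e \<in> set (hedges G). set (snd e) \<subseteq> A \<or> set (snd e) \<inter> A = {}))"

definition reducible :: "nat \<Rightarrow> (nat \<Rightarrow> nat) \<Rightarrow> gsum \<Rightarrow> bool" where
  "reducible n nc c \<longleftrightarrow> is_gsum n nc c \<and>
     (fsum n c = (\<lambda>t. 0) \<or>
      (\<exists>c'. is_gsum n nc c' \<and> (\<forall>G \<in> supp c'. disconnected G) \<and> fsum n c = fsum n c'))"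

definition irreducible :: "nat \<Rightarrow> (nat \<Rightarrow> nat) \<Rightarrow> gsum \<Rightarrow> bool" where
  "irreducible n nc c \<longleftrightarrow> is_gsum n nc c \<and> \<not> reducible n nc c"

definition red_equiv :: "nat \<Rightarrow> (nat \<Rightarrow> nat) \<Rightarrow> gsum \<Rightarrow> gsum \<Rightarrow> bool" where
  "red_equiv n nc c1 c2 \<longleftrightarrow> reducible n nc (\<lambda>G. c1 G - c2 G)"

definition red_indep :: "nat \<Rightarrow> (nat \<Rightarrow> nat) \<Rightarrow> hgraph set \<Rightarrow> bool" where
  "red_indep n nc S \<longleftrightarrow> (\<forall>a. finite (supp a) \<and> supp a \<subseteq> S \<and> reducible n nc a \<longrightarrow> a = (\<lambda>G. 0))"

definition vdeg :: "nat \<Rightarrow> hgraph \<Rightarrow> nat \<Rightarrow> nat" where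
  "vdeg n G v = n - (\<Sum>e\<leftarrow>hedges G. if set (snd e) = {v} then length (snd e) else 0)"

definition dtype :: "nat \<Rightarrow> hgraph \<Rightarrow> nat list" where
  "dtype n G = rev (sort (map (vdeg n G) [0..<nverts G]))"

definition dless :: "nat \<Rightarrow> hgraph \<Rightarrow> hgraph \<Rightarrow> bool" where
  "dless n G G' \<longleftrightarrow> (let d = dtype n G; d' = dtype n G' in
     length d = length d' \<and> length d \<ge> 1 \<and>
     (\<forall>i < length d - 1. d ! i \<le> d' ! i) \<and> last d < last d')"

definition deg_reducible :: "nat \<Rightarrow> (nat \<Rightarrow> nat) \<Rightarrow> gsum \<Rightarrow> bool" where
  "deg_reducible n nc c \<longleftrightarrow> is_gsum n nc c \<and>
     (red_equiv n nc c (\<lambda>G. 0) \<or>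
      (\<exists>c'. is_gsum n nc c' \<and> red_equiv n nc c c' \<and>
         (\<forall>G \<in> supp c. \<forall>G' \<in> supp c'. dless n G' G)))"

definition deg_irreducible :: "nat \<Rightarrow> (nat \<Rightarrow> nat) \<Rightarrow> gsum \<Rightarrow> bool" where
  "deg_irreducible n nc c \<longleftrightarrow> is_gsum n nc c \<and> \<not> deg_reducible n nc c"

definition deg_red_indep :: "nat \<Rightarrow> (nat \<Rightarrow> nat) \<Rightarrow> hgraph set \<Rightarrow> bool" where
  "deg_red_indep n nc S \<longleftrightarrow> (\<forall>a. finite (supp a) \<and> supp a \<subseteq> S \<and> deg_reducible n nc a \<longrightarrow> a = (\<lambda>G. 0))"

definition maximal_set :: "('a set \<Rightarrow> bool) \<Rightarrow> 'a set \<Rightarrow> bool" where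
  "maximal_set P M \<longleftrightarrow> P M \<and> (\<forall>S. P S \<and> M \<subseteq> S \<longrightarrow> S = M)"

definition DIRI :: "nat \<Rightarrow> (nat \<Rightarrow> nat) \<Rightarrow> hgraph set \<Rightarrow> bool" where
  "DIRI n nc S \<longleftrightarrow> (\<forall>G \<in> S. valid_hg n nc G \<and> deg_irreducible n nc (single G)) \<and> deg_red_indep n nc S"

definition IRI :: "nat \<Rightarrow> (nat \<Rightarrow> nat) \<Rightarrow> hgraph set \<Rightarrow> bool" where
  "IRI n nc S \<longleftrightarrow> (\<forall>G \<in> S. valid_hg n nc G \<and> irreducible n nc (single G)) \<and> red_indep n nc S"

end

theory Submission
  imports Defs
begin

text \<open>Reducible graphsums form a linear subspace and every reducible graphsum is
degree-reducible, so degree-irreducibility and degree-reducible independence imply their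
plain counterparts. For maximality, one shows by induction on the smallest virtual degree
that every hypergraph G is \<open>\<simeq>\<^sub>r\<close> to a graphsum supported on M: if G is not in M, maximality
of M yields a degree-reducible relation with a nonzero coefficient at G, which expresses G
modulo reducible graphsums through M and hypergraphs of smaller degree type. A hypergraph
outside M in a reducibly independent superset of M would then give a nontrivial reducible
relation.\<close>

lemma supp_single: "supp (single G) = {G}"
  by (auto simp: supp_def single_def)

lemma supp_add_subset: "supp (\<lambda>G. x G + y G) \<subseteq> supp x \<union> supp y"
  by (auto simp: supp_def)

lemma supp_scale_subset: "supp (\<lambda>G. k * x G) \<subseteq> supp x"
  by (auto simp: supp_def)

lemma gsum_expansion:
  assumes "finite (supp c)"
  shows "(\<lambda>H. \<Sum>G\<in>supp c. c G * single G H) = c"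
proof
  fix H
  have "(\<Sum>G\<in>supp c. c G * single G H) = (\<Sum>G\<in>supp c. if H = G then c G else 0)"
    by (rule sum.cong) (auto simp: single_def)
  also have "\<dots> = c H"
    using assms by (simp add: sum.delta supp_def)
  finally show "(\<Sum>G\<in>supp c. c G * single G H) = c H" .
qed

lemma is_gsum_zero: "is_gsum n nc (\<lambda>G. 0)"
  by (simp add: is_gsum_def supp_def)

lemma is_gsum_add:
  "is_gsum n nc x \<Longrightarrow> is_gsum n nc y \<Longrightarrow> is_gsum n nc (\<lambda>G. x G + y G)"
  using supp_add_subset[of x y] unfolding is_gsum_def
  by (meson Un_iff finite_UnI finite_subset subsetD)

lemma is_gsum_scale: "is_gsum n nc x \<Longrightarrow> is_gsum n nc (\<lambda>G. k * x G)"
  using supp_scale_subset[of k x] unfolding is_gsum_def by (meson finite_subset subsetD)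

lemma fsum_eq_sum_superset:
  assumes "finite A" "supp c \<subseteq> A"
  shows "fsum n c t = (\<Sum>G\<in>A. c G * finv n G t)"
  unfolding fsum_def
  by (rule sum.mono_neutral_left) (use assms in \<open>auto simp: supp_def\<close>)

lemma fsum_zero: "fsum n (\<lambda>G. 0) t = 0"
  by (simp add: fsum_def supp_def)

lemma fsum_add:
  assumes "finite (supp x)" "finite (supp y)"
  shows "fsum n (\<lambda>G. x G + y G) t = fsum n x t + fsum n y t"
proof -
  let ?A = "supp x \<union> supp y"
  have "fsum n (\<lambda>G. x G + y G) t = (\<Sum>G\<in>?A. (x G + y G) * finv n G t)"
    using fsum_eq_sum_superset[OF _ supp_add_subset] assms by simp
  also have "\<dots> = (\<Sum>G\<in>?A. x G * finv n G t) + (\<Sum>G\<in>?A. y G * finv n G t)"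
    by (simp add: distrib_right sum.distrib)
  also have "\<dots> = fsum n x t + fsum n y t"
    using fsum_eq_sum_superset[of ?A x n t] fsum_eq_sum_superset[of ?A y n t] assms by auto
  finally show ?thesis .
qed

lemma fsum_scale:
  assumes "finite (supp x)"
  shows "fsum n (\<lambda>G. k * x G) t = k * fsum n x t"
proof -
  have "fsum n (\<lambda>G. k * x G) t = (\<Sum>G\<in>supp x. k * x G * finv n G t)"
    using fsum_eq_sum_superset[OF assms supp_scale_subset] by simp
  also have "\<dots> = k * fsum n x t"
    by (simp add: fsum_def sum_distrib_left mult.assoc)
  finally show ?thesis .
qed

lemma reducible_iff_disconnected:
  "reducible n nc c \<longleftrightarrow> is_gsum n nc c \<and>
     (\<exists>c'. is_gsum n nc c' \<and> (\<forall>G\<in>supp c'. disconnected G) \<and> fsum n c = fsum n c')"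
proof -
  have "fsum n c = (\<lambda>t. 0) \<longleftrightarrow> fsum n c = fsum n (\<lambda>G. 0)"
    by (simp add: fun_eq_iff fsum_zero)
  moreover have "supp (\<lambda>G::hgraph. 0::complex) = {}"
    by (simp add: supp_def)
  ultimately show ?thesis
    unfolding reducible_def using is_gsum_zero[of n nc] by blast
qed

lemma reducible_zero: "reducible n nc (\<lambda>G. 0)"
  unfolding reducible_def using is_gsum_zero fsum_zero by (auto simp: fun_eq_iff)

lemma reducible_add:
  assumes "reducible n nc x" "reducible n nc y"
  shows "reducible n nc (\<lambda>G. x G + y G)"
proof -
  obtain cx where cx: "is_gsum n nc cx" "\<forall>G\<in>supp cx. disconnected G" "fsum n x = fsum n cx"
    and gx: "is_gsum n nc x" using assms(1) reducible_iff_disconnected by blast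
  obtain cy where cy: "is_gsum n nc cy" "\<forall>G\<in>supp cy. disconnected G" "fsum n y = fsum n cy"
    and gy: "is_gsum n nc y" using assms(2) reducible_iff_disconnected by blast
  have "fsum n (\<lambda>G. x G + y G) = fsum n (\<lambda>G. cx G + cy G)"
    using fsum_add gx gy cx cy unfolding is_gsum_def by (auto simp: fun_eq_iff)
  then show ?thesis
    unfolding reducible_def
    using is_gsum_add[OF gx gy] is_gsum_add[OF cx(1) cy(1)] supp_add_subset[of cx cy] cx(2) cy(2)
    by blast
qed

lemma reducible_scale:
  assumes "reducible n nc x"
  shows "reducible n nc (\<lambda>G. k * x G)"
proof -
  obtain cx where cx: "is_gsum n nc cx" "\<forall>G\<in>supp cx. disconnected G" "fsum n x = fsum n cx"
    and gx: "is_gsum n nc x" using assms reducible_iff_disconnected by blast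
  have "fsum n (\<lambda>G. k * x G) = fsum n (\<lambda>G. k * cx G)"
    using fsum_scale gx cx unfolding is_gsum_def by (auto simp: fun_eq_iff)
  then show ?thesis
    unfolding reducible_def
    using is_gsum_scale[OF gx] is_gsum_scale[OF cx(1)] supp_scale_subset[of k cx] cx(2)
    by blast
qed

lemma reducible_imp_deg_reducible: "reducible n nc c \<Longrightarrow> deg_reducible n nc c"
  unfolding deg_reducible_def red_equiv_def by (auto simp: reducible_def)

lemma DIRI_imp_IRI: "DIRI n nc S \<Longrightarrow> IRI n nc S"
  using reducible_imp_deg_reducible
  unfolding DIRI_def IRI_def irreducible_def deg_irreducible_def red_indep_def deg_red_indep_def
  by blast

definition in_red_span :: "nat \<Rightarrow> (nat \<Rightarrow> nat) \<Rightarrow> hgraph set \<Rightarrow> gsum \<Rightarrow> bool" where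
  "in_red_span n nc M c \<longleftrightarrow>
     (\<exists>a. finite (supp a) \<and> supp a \<subseteq> M \<and> reducible n nc (\<lambda>H. c H - a H))"

lemma in_red_span_supported:
  "finite (supp c) \<Longrightarrow> supp c \<subseteq> M \<Longrightarrow> in_red_span n nc M c"
  unfolding in_red_span_def using reducible_zero by fastforce

lemma in_red_span_red_equiv:
  assumes "reducible n nc (\<lambda>H. c H - d H)" "in_red_span n nc M d"
  shows "in_red_span n nc M c"
proof -
  obtain a where a: "finite (supp a)" "supp a \<subseteq> M" "reducible n nc (\<lambda>H. d H - a H)"
    using assms(2) unfolding in_red_span_def by blast
  have "reducible n nc (\<lambda>H. (c H - d H) + (d H - a H))"
    using reducible_add[OF assms(1) a(3)] .
  then show ?thesis
    unfolding in_red_span_def using a(1,2) by auto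
qed

lemma in_red_span_add:
  assumes "in_red_span n nc M x" "in_red_span n nc M y"
  shows "in_red_span n nc M (\<lambda>H. x H + y H)"
proof -
  obtain a where a: "finite (supp a)" "supp a \<subseteq> M" "reducible n nc (\<lambda>H. x H - a H)"
    using assms(1) unfolding in_red_span_def by blast
  obtain b where b: "finite (supp b)" "supp b \<subseteq> M" "reducible n nc (\<lambda>H. y H - b H)"
    using assms(2) unfolding in_red_span_def by blast
  have "reducible n nc (\<lambda>H. (x H - a H) + (y H - b H))"
    using reducible_add[OF a(3) b(3)] .
  moreover have "finite (supp (\<lambda>H. a H + b H))" "supp (\<lambda>H. a H + b H) \<subseteq> M"
    using supp_add_subset[of a b] a(1,2) b(1,2) finite_subset by blast+
  ultimately show ?thesis
    unfolding in_red_span_def by (intro exI[of _ "\<lambda>H. a H + b H"]) (auto simp: algebra_simps)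
qed

lemma in_red_span_scale:
  assumes "in_red_span n nc M x"
  shows "in_red_span n nc M (\<lambda>H. k * x H)"
proof -
  obtain a where a: "finite (supp a)" "supp a \<subseteq> M" "reducible n nc (\<lambda>H. x H - a H)"
    using assms unfolding in_red_span_def by blast
  have "reducible n nc (\<lambda>H. k * (x H - a H))"
    using reducible_scale[OF a(3)] .
  moreover have "finite (supp (\<lambda>H. k * a H))" "supp (\<lambda>H. k * a H) \<subseteq> M"
    using supp_scale_subset[of k a] a(1,2) finite_subset by blast+
  ultimately show ?thesis
    unfolding in_red_span_def by (intro exI[of _ "\<lambda>H. k * a H"]) (auto simp: algebra_simps)
qed

lemma in_red_span_sum:
  assumes "finite F" "\<forall>i\<in>F. in_red_span n nc M (f i)"
  shows "in_red_span n nc M (\<lambda>H. \<Sum>i\<in>F. f i H)"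
  using assms
proof (induction F rule: finite_induct)
  case empty
  then show ?case by (simp add: in_red_span_supported supp_def)
next
  case (insert i F)
  then show ?case using in_red_span_add[of n nc M "f i" "\<lambda>H. \<Sum>i\<in>F. f i H"] by simp
qed

lemma in_red_span_single_of_coeff:
  assumes "in_red_span n nc M b" "finite (supp b)" "supp b \<subseteq> insert G M" "b G \<noteq> 0"
  shows "in_red_span n nc M (single G)"
proof -
  define r where "r = (\<lambda>H. if H = G then 0 else b H)"
  have "finite (supp r)" "supp r \<subseteq> M"
    using assms(2,3) by (auto simp: r_def supp_def intro: finite_subset)
  then have "in_red_span n nc M (\<lambda>H. b H + (-1) * r H)"
    by (intro in_red_span_add[OF assms(1)] in_red_span_scale in_red_span_supported)
  then have "in_red_span n nc M (\<lambda>H. (1 / b G) * (b H + (-1) * r H))"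
    by (rule in_red_span_scale)
  moreover have "(\<lambda>H. (1 / b G) * (b H + (-1) * r H)) = single G"
    using assms(4) by (auto simp: r_def single_def)
  ultimately show ?thesis by simp
qed

lemma maximal_DIRI_deg_reducible_relation:
  assumes "maximal_set (DIRI n nc) M" "valid_hg n nc G" "G \<notin> M"
  obtains b where "finite (supp b)" "supp b \<subseteq> insert G M" "deg_reducible n nc b" "b G \<noteq> 0"
proof -
  have DM: "DIRI n nc M" and not_DIRI: "\<not> DIRI n nc (insert G M)"
    using assms unfolding maximal_set_def by auto
  have "\<exists>b. finite (supp b) \<and> supp b \<subseteq> insert G M \<and> deg_reducible n nc b \<and> b \<noteq> (\<lambda>H. 0)"
  proof (cases "deg_red_indep n nc (insert G M)")
    case False
    then show ?thesis unfolding deg_red_indep_def by blast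
  next
    case True
    then have "\<not> deg_irreducible n nc (single G)"
      using DM not_DIRI assms(2) unfolding DIRI_def by auto
    then have "deg_reducible n nc (single G)"
      using assms(2) unfolding deg_irreducible_def is_gsum_def supp_single by auto
    moreover have "single G \<noteq> (\<lambda>H. 0)"
      by (metis single_def zero_neq_one)
    ultimately show ?thesis using supp_single[of G] by (intro exI[of _ "single G"]) auto
  qed
  then obtain b where b: "finite (supp b)" "supp b \<subseteq> insert G M" "deg_reducible n nc b"
    "b \<noteq> (\<lambda>H. 0)" by blast
  have "b G \<noteq> 0"
  proof
    assume "b G = 0"
    then have "supp b \<subseteq> M" using b(2) by (auto simp: supp_def)
    then show False using DM b unfolding DIRI_def deg_red_indep_def by blast
  qed
  with b that show ?thesis by blast
qed

lemma deg_reducible_red_equiv_lower: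
  assumes "deg_reducible n nc b" "G \<in> supp b"
  obtains c where "is_gsum n nc c" "reducible n nc (\<lambda>H. b H - c H)"
    "\<forall>G'\<in>supp c. dless n G' G"
proof (cases "red_equiv n nc b (\<lambda>H. 0)")
  case True
  then show ?thesis
    using that[of "\<lambda>H. 0"] is_gsum_zero unfolding red_equiv_def by (auto simp: supp_def)
next
  case False
  then show ?thesis
    using assms that unfolding deg_reducible_def red_equiv_def by blast
qed

lemma maximal_DIRI_red_span:
  assumes "maximal_set (DIRI n nc) M"
  shows "valid_hg n nc G \<Longrightarrow> in_red_span n nc M (single G)"
proof (induction G rule: measure_induct_rule[where f="\<lambda>G. last (dtype n G)"])
  case (less G)
  show ?case
  proof (cases "G \<in> M")
    case True
    then show ?thesis by (simp add: in_red_span_supported supp_single)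
  next
    case False
    obtain b where b: "finite (supp b)" "supp b \<subseteq> insert G M" "deg_reducible n nc b" "b G \<noteq> 0"
      using maximal_DIRI_deg_reducible_relation[OF assms less.prems False] .
    have "G \<in> supp b"
      using b(4) by (simp add: supp_def)
    then obtain c where c: "is_gsum n nc c" "reducible n nc (\<lambda>H. b H - c H)"
      "\<forall>G'\<in>supp c. dless n G' G"
      using deg_reducible_red_equiv_lower[OF b(3)] by blast
    have fin_c: "finite (supp c)"
      using c(1) unfolding is_gsum_def by blast
    have "in_red_span n nc M (single G')" if "G' \<in> supp c" for G'
    proof (rule less.IH)
      show "last (dtype n G') < last (dtype n G)"
        using c(3) that by (simp add: dless_def Let_def)
      show "valid_hg n nc G'"
        using c(1) that unfolding is_gsum_def by blast
    qed
    then have "in_red_span n nc M (\<lambda>H. \<Sum>G'\<in>supp c. c G' * single G' H)"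
      by (intro in_red_span_sum[OF fin_c] ballI in_red_span_scale) blast
    then have "in_red_span n nc M c"
      by (simp only: gsum_expansion[OF fin_c])
    then have "in_red_span n nc M b"
      using in_red_span_red_equiv c(2) by blast
    then show ?thesis
      using in_red_span_single_of_coeff b(1,2,4) by blast
  qed
qed

lemma red_indep_not_in_red_span:
  assumes "red_indep n nc S" "M \<subseteq> S" "G \<in> S" "G \<notin> M"
  shows "\<not> in_red_span n nc M (single G)"
proof
  assume "in_red_span n nc M (single G)"
  then obtain a where a: "finite (supp a)" "supp a \<subseteq> M" "reducible n nc (\<lambda>H. single G H - a H)"
    unfolding in_red_span_def by blast
  let ?d = "\<lambda>H. single G H - a H"
  have "supp ?d \<subseteq> insert G (supp a)"
    by (auto simp: supp_def single_def)
  then have "finite (supp ?d)" "supp ?d \<subseteq> S"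
    using a(1,2) assms(2,3) finite_subset by blast+
  then have "?d = (\<lambda>H. 0)"
    using assms(1) a(3) unfolding red_indep_def by blast
  then have "?d G = 0"
    by (rule fun_cong)
  moreover have "a G = 0"
    using a(2) assms(4) by (auto simp: supp_def)
  ultimately show False by (simp add: single_def)
qed

theorem mainTheorem4:
  fixes n :: nat and nc :: "nat \<Rightarrow> nat" and M :: "hgraph set"
  assumes "n \<ge> 2"
    and "maximal_set (DIRI n nc) M"
  shows "maximal_set (IRI n nc) M"
proof -
  have "IRI n nc M"
    using assms(2) DIRI_imp_IRI unfolding maximal_set_def by blast
  moreover have "S \<subseteq> M" if S: "IRI n nc S" "M \<subseteq> S" for S
  proof
    fix G assume "G \<in> S"
    then have "in_red_span n nc M (single G)"
      using maximal_DIRI_red_span[OF assms(2)] S(1) unfolding IRI_def by blast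
    then show "G \<in> M"
      using red_indep_not_in_red_span S \<open>G \<in> S\<close> unfolding IRI_def by blast
  qed
  ultimately show ?thesis unfolding maximal_set_def by blast
qed

end
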